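(* Let $\{S(t)\}_{t\ge0}$ be a dissipative semigroup on a complete metric space $(X,d)$ and let $\mathcal{B}_0$ be a positively invariant bounded absorbing set. Assume there exist constants $T>0$, $\delta_0>0$, $\eta\in[0,1)$, a function $g:(\mathbb{R}^+)^m\to\mathbb{R}^+$ and pseudometrics $\varrho_1,\dots,\varrho_m$ on $\mathcal{B}_0$ such that: (i) $g$ is non-decreasing in each variable, $g(0,\dots,0)=0$, and $g$ is continuous at $(0,\dots,0)$; (ii) each $\varrho_i$ is precompact on $\mathcal{B}_0$, i.e. every sequence in $\mathcal{B}_0$ has a subsequence which is Cauchy with respect to $\varrho_i$; (iii) the inequality $$d(S(T)y_1,S(T)y_2)\le\eta\, d(y_1,y_2)+g\big(\varrho_1(y_1,y_2),\dots,\varrho_m(y_1,y_2)\big)$$ holds for all $y_1,y_2\in\mathcal{B}_0$ with $\varrho_i(y_1,y_2)\le\delta_0$ for $i=1,\dots,m$. Then $(X,\{S(t)\}_{t\ge0})$ is exponentially decaying with respect to the noncompactness measure, and for every bounded $B\subseteq X$, $$\alpha(S(t)B)\le\eta^{\frac{t-t_*(B)-T}{T}}\alpha(\mathcal{B}_0)\quad\forall t\ge t_*(B)+T,$$ where $t_*(B)$ satisfies $S(t)B\subseteq\mathcal{B}_0$ for all $t\ge t_*(B)$.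
   Context: A semigroup consists of continuous maps $S(t):X\to X$ with $S(0)=I$, $S(t+s)=S(t)S(s)$; it is dissipative if it has a bounded absorbing set (a closed set $\mathcal{B}$ such that every bounded $B$ satisfies $S(t)B\subseteq\mathcal{B}$ for all large $t$); positively invariant means $S(t)\mathcal{B}_0\subseteq\mathcal{B}_0$ for $t\ge0$. $\alpha$ is the Kuratowski measure of noncompactness, $\alpha(B)=\inf\{\delta>0:B\text{ has a finite cover by sets of diameter}<\delta\}$. The system is exponentially decaying with respect to the noncompactness measure if it is dissipative and there are $t_0>0$ and constants $C,\beta>0$ with $\alpha(S(t)\mathcal{B}_0)\le Ce^{-\beta t}$ for all $t\ge t_0$, for a positively invariant bounded absorbing set $\mathcal{B}_0$. *)

theory Defs
  imports "HOL-Analysis.Analysis"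
begin

definition semigroup :: "(real \<Rightarrow> 'a::metric_space \<Rightarrow> 'a) \<Rightarrow> bool" where
  "semigroup S \<longleftrightarrow>
     (\<forall>t\<ge>0. continuous_on UNIV (S t)) \<and> S 0 = id \<and>
     (\<forall>t\<ge>0. \<forall>s\<ge>0. S (t + s) = S t \<circ> S s)"

definition absorbing_set :: "(real \<Rightarrow> 'a::metric_space \<Rightarrow> 'a) \<Rightarrow> 'a set \<Rightarrow> bool" where
  "absorbing_set S B0 \<longleftrightarrow> closed B0 \<and> bounded B0 \<and>
     (\<forall>B. bounded B \<longrightarrow> (\<exists>t0. \<forall>t\<ge>t0. S t ` B \<subseteq> B0))"

definition dissipative :: "(real \<Rightarrow> 'a::metric_space \<Rightarrow> 'a) \<Rightarrow> bool" where
  "dissipative S \<longleftrightarrow> semigroup S \<and> (\<exists>B0. absorbing_set S B0)"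

definition positively_invariant :: "(real \<Rightarrow> 'a \<Rightarrow> 'a) \<Rightarrow> 'a set \<Rightarrow> bool" where
  "positively_invariant S B0 \<longleftrightarrow> (\<forall>t\<ge>0. S t ` B0 \<subseteq> B0)"

definition kuratowski :: "'a::metric_space set \<Rightarrow> real" where
  "kuratowski B = Inf {\<delta>. \<delta> > 0 \<and> (\<exists>F. finite F \<and> B \<subseteq> \<Union>F \<and>
        (\<forall>A\<in>F. bounded A \<and> diameter A < \<delta>))}"

definition exp_decaying :: "(real \<Rightarrow> 'a::metric_space \<Rightarrow> 'a) \<Rightarrow> 'a set \<Rightarrow> bool" where
  "exp_decaying S B0 \<longleftrightarrow> dissipative S \<and> absorbing_set S B0 \<and> positively_invariant S B0 \<and>
     (\<exists>t0>0. \<exists>C>0. \<exists>\<beta>>0. \<forall>t\<ge>t0. kuratowski (S t ` B0) \<le> C * exp (- \<beta> * t))"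

definition pseudometric_on :: "'a set \<Rightarrow> ('a \<Rightarrow> 'a \<Rightarrow> real) \<Rightarrow> bool" where
  "pseudometric_on B r \<longleftrightarrow>
     (\<forall>x\<in>B. \<forall>y\<in>B. r x y \<ge> 0 \<and> r x y = r y x) \<and> (\<forall>x\<in>B. r x x = 0) \<and>
     (\<forall>x\<in>B. \<forall>y\<in>B. \<forall>z\<in>B. r x z \<le> r x y + r y z)"

definition precompact_on :: "'a set \<Rightarrow> ('a \<Rightarrow> 'a \<Rightarrow> real) \<Rightarrow> bool" where
  "precompact_on B r \<longleftrightarrow>
     (\<forall>s. range s \<subseteq> B \<longrightarrow> (\<exists>h::nat\<Rightarrow>nat. strict_mono h \<and>
        (\<forall>\<epsilon>>0. \<exists>N. \<forall>m\<ge>N. \<forall>n\<ge>N. r (s (h m)) (s (h n)) < \<epsilon>)))"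

text \<open>Real power with the convention b^0 = 1 (also for b = 0).\<close>
definition rpow :: "real \<Rightarrow> real \<Rightarrow> real" where
  "rpow b x = (if x = 0 then 1 else b powr x)"

end

theory Submission
  imports Defs
begin

text \<open>
  On pieces of \<open>\<B>\<^sub>0\<close> where all \<open>\<rho>\<^sub>i\<close> are below \<open>\<delta>\<close>, the hypothesis makes \<open>S(T)\<close> an
  \<open>\<eta>\<close>-contraction up to the error \<open>g(\<delta>,\<dots>,\<delta>)\<close>, which tends to \<open>0\<close> with \<open>\<delta>\<close>. Precompactness
  of the \<open>\<rho>\<^sub>i\<close> cuts \<open>\<B>\<^sub>0\<close> into finitely many such pieces, and refining a nearly optimal
  cover of \<open>A \<subseteq> \<B>\<^sub>0\<close> by them gives \<open>\<alpha>(S(T)A) \<le> \<eta> \<alpha>(A)\<close>. Iterating inside the invariant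
  set \<open>\<B>\<^sub>0\<close> after the entrance time \<open>t\<^sub>*(B)\<close> yields \<open>\<alpha>(S(t)B) \<le> \<eta>\<^sup>k \<alpha>(\<B>\<^sub>0)\<close> with
  \<open>k = \<lfloor>(t - t\<^sub>*)/T\<rfloor>\<close>, and \<open>\<eta>\<^sup>k\<close> is dominated both by the stated power of \<open>\<eta>\<close> and by an
  exponential in \<open>t\<close>.
\<close>

definition finite_cover_diameter_less :: "'a::metric_space set \<Rightarrow> real \<Rightarrow> bool" where
  "finite_cover_diameter_less B d \<longleftrightarrow>
     (\<exists>F. finite F \<and> B \<subseteq> \<Union>F \<and> (\<forall>A\<in>F. bounded A \<and> diameter A < d))"

lemma kuratowski_altdef: "kuratowski B = Inf {d. d > 0 \<and> finite_cover_diameter_less B d}"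
  unfolding kuratowski_def finite_cover_diameter_less_def by simp

lemma finite_cover_diameter_less_ne:
  assumes "bounded B" shows "{d. d > 0 \<and> finite_cover_diameter_less B d} \<noteq> {}"
proof -
  have "diameter B + 1 > 0" using diameter_ge_0[OF assms] by linarith
  moreover have "finite_cover_diameter_less B (diameter B + 1)"
    unfolding finite_cover_diameter_less_def using assms by (intro exI[of _ "{B}"]) auto
  ultimately show ?thesis by blast
qed

lemma kuratowski_nonneg: "bounded B \<Longrightarrow> 0 \<le> kuratowski B"
  unfolding kuratowski_altdef
  using finite_cover_diameter_less_ne by (intro cInf_greatest) auto

lemma kuratowski_le_cover:
  assumes "finite_cover_diameter_less B d" "d > 0"
  shows "kuratowski B \<le> d"
  unfolding kuratowski_altdef using assms by (intro cInf_lower) (auto intro: bdd_belowI[of _ 0])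

lemma finite_cover_diameter_less_mono:
  assumes "finite_cover_diameter_less B d" "d \<le> d'"
  shows "finite_cover_diameter_less B d'"
  using assms unfolding finite_cover_diameter_less_def by (meson less_le_trans)

lemma kuratowski_cover:
  assumes "bounded B" "e > 0"
  shows "finite_cover_diameter_less B (kuratowski B + e)"
proof -
  have "Inf {d. d > 0 \<and> finite_cover_diameter_less B d} < kuratowski B + e"
    using assms(2) unfolding kuratowski_altdef by simp
  then obtain d where "finite_cover_diameter_less B d" "d < kuratowski B + e"
    using cInf_lessD[OF finite_cover_diameter_less_ne[OF assms(1)]] by blast
  then show ?thesis by (simp add: finite_cover_diameter_less_mono)
qed

lemma kuratowski_mono:
  assumes "A \<subseteq> B" "bounded B"
  shows "kuratowski A \<le> kuratowski B"
  unfolding kuratowski_altdef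
proof (rule cInf_superset_mono)
  show "{d. d > 0 \<and> finite_cover_diameter_less B d} \<noteq> {}"
    using finite_cover_diameter_less_ne[OF assms(2)] .
  show "{d. d > 0 \<and> finite_cover_diameter_less B d} \<subseteq> {d. d > 0 \<and> finite_cover_diameter_less A d}"
    using assms(1) unfolding finite_cover_diameter_less_def by blast
qed (auto intro: bdd_belowI[of _ 0])

lemma diameter_le_dist:
  fixes S :: "'a::metric_space set"
  assumes "0 \<le> d" "\<And>x y. x \<in> S \<Longrightarrow> y \<in> S \<Longrightarrow> dist x y \<le> d"
  shows "diameter S \<le> d"
  using assms by (auto simp: diameter_def intro: cSUP_least)

text \<open>Intersect a nearly optimal cover of \<open>A\<close> with the pieces for a small error.\<close>
lemma kuratowski_image_le:
  fixes f :: "'a::metric_space \<Rightarrow> 'b::metric_space"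
  assumes A: "bounded A" and \<eta>: "0 \<le> \<eta>"
    and pieces: "\<And>e. e > 0 \<Longrightarrow> \<exists>\<P>. finite \<P> \<and> A \<subseteq> \<Union>\<P> \<and>
                   (\<forall>P\<in>\<P>. \<forall>x\<in>P \<inter> A. \<forall>y\<in>P \<inter> A. dist (f x) (f y) \<le> \<eta> * dist x y + e)"
  shows "kuratowski (f ` A) \<le> \<eta> * kuratowski A"
proof (rule field_le_epsilon)
  fix e :: real assume "e > 0"
  define \<epsilon> where "\<epsilon> = e / (\<eta> + 2)"
  have \<epsilon>: "\<epsilon> > 0" "(\<eta> + 1) * \<epsilon> < e" using \<open>e > 0\<close> \<eta> by (auto simp: \<epsilon>_def field_simps)
  obtain F where F: "finite F" "A \<subseteq> \<Union>F" "\<And>A'. A' \<in> F \<Longrightarrow> bounded A'"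
    "\<And>A'. A' \<in> F \<Longrightarrow> diameter A' < kuratowski A + \<epsilon>"
    using kuratowski_cover[OF A \<epsilon>(1)] unfolding finite_cover_diameter_less_def by auto
  obtain \<P> where \<P>: "finite \<P>" "A \<subseteq> \<Union>\<P>"
    and \<P>_contr: "\<forall>P\<in>\<P>. \<forall>x\<in>P \<inter> A. \<forall>y\<in>P \<inter> A. dist (f x) (f y) \<le> \<eta> * dist x y + \<epsilon>"
    using pieces[OF \<epsilon>(1)] by auto
  have kA: "0 \<le> kuratowski A" using kuratowski_nonneg[OF A] .
  define d where "d = \<eta> * kuratowski A + (\<eta> + 1) * \<epsilon>"
  have "d \<ge> 0" using kA \<eta> \<epsilon>(1) by (simp add: d_def)
  have small: "dist (f x) (f y) \<le> d" if "A' \<in> F" "P \<in> \<P>" "x \<in> A' \<inter> P \<inter> A" "y \<in> A' \<inter> P \<inter> A"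
    for A' P x y
  proof -
    have "dist x y \<le> diameter A'" using diameter_bounded_bound[OF F(3)[OF that(1)]] that(3,4) by blast
    then have "\<eta> * dist x y \<le> \<eta> * (kuratowski A + \<epsilon>)"
      using F(4)[OF that(1)] \<eta> by (intro mult_left_mono) auto
    moreover have "dist (f x) (f y) \<le> \<eta> * dist x y + \<epsilon>" using \<P>_contr that(2,3,4) by blast
    ultimately show ?thesis by (simp add: d_def algebra_simps)
  qed
  define G where "G = (\<lambda>(A', P). f ` (A' \<inter> P \<inter> A)) ` (F \<times> \<P>)"
  have "finite_cover_diameter_less (f ` A) (\<eta> * kuratowski A + e)"
    unfolding finite_cover_diameter_less_def
  proof (intro exI[of _ G] conjI ballI)
    show "finite G" using F(1) \<P>(1) by (simp add: G_def)
    show "f ` A \<subseteq> \<Union>G"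
    proof
      fix z assume "z \<in> f ` A"
      then obtain x A' P where "z = f x" "x \<in> A" "A' \<in> F" "x \<in> A'" "P \<in> \<P>" "x \<in> P"
        using F(2) \<P>(2) by blast
      then show "z \<in> \<Union>G" unfolding G_def by blast
    qed
  next
    fix X assume "X \<in> G"
    then obtain A' P where "A' \<in> F" "P \<in> \<P>" "X = f ` (A' \<inter> P \<inter> A)" by (auto simp: G_def)
    then have X_small: "\<forall>u\<in>X. \<forall>v\<in>X. dist u v \<le> d" using small by blast
    then show "bounded X" unfolding bounded_two_points by blast
    have "diameter X \<le> d" using X_small \<open>d \<ge> 0\<close> by (intro diameter_le_dist) auto
    then show "diameter X < \<eta> * kuratowski A + e" using \<epsilon>(2) by (simp add: d_def)
  qed
  moreover have "\<eta> * kuratowski A + e > 0" using kA \<eta> \<open>e > 0\<close> by (simp add: add_nonneg_pos)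
  ultimately show "kuratowski (f ` A) \<le> \<eta> * kuratowski A + e" by (rule kuratowski_le_cover)
qed

lemma precompact_on_finite_net:
  assumes pc: "precompact_on B r" and "d > 0"
  shows "\<exists>C. finite C \<and> C \<subseteq> B \<and> (\<forall>x\<in>B. \<exists>c\<in>C. r x c < d)"
proof (rule ccontr)
  \<comment> \<open>Otherwise a greedily chosen \<open>d\<close>-separated sequence has no Cauchy subsequence.\<close>
  assume no_net: "\<not> ?thesis"
  let ?Q = "\<lambda>s n x. x \<in> B \<and> (\<forall>m < (n::nat). \<not> r x (s m) < d)"
  have "\<exists>s. \<forall>n. ?Q s n (s n)"
  proof (rule dependent_wellorder_choice)
    fix n s assume "\<And>m. m < n \<Longrightarrow> ?Q s m (s m)"
    then have "s ` {..<n} \<subseteq> B" by auto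
    then have "\<not> (\<forall>x\<in>B. \<exists>c\<in>s ` {..<n}. r x c < d)" using no_net by blast
    then show "\<exists>x. ?Q s n x" by auto
  qed simp
  then obtain s :: "nat \<Rightarrow> 'a"
    where "range s \<subseteq> B" and separated: "\<And>m n. m < n \<Longrightarrow> \<not> r (s n) (s m) < d"
    by blast
  then obtain h :: "nat \<Rightarrow> nat" where "strict_mono h"
    and "\<forall>\<epsilon>>0. \<exists>N. \<forall>m\<ge>N. \<forall>n\<ge>N. r (s (h m)) (s (h n)) < \<epsilon>"
    using pc unfolding precompact_on_def by blast
  then obtain N where "r (s (h (Suc N))) (s (h N)) < d" using \<open>d > 0\<close> by (meson le_Suc_eq order_refl)
  then show False using separated[of "h N" "h (Suc N)"] \<open>strict_mono h\<close> by (auto simp: strict_mono_def)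
qed

lemma precompact_pseudometrics_finite_cover:
  fixes \<rho> :: "'i::finite \<Rightarrow> 'a \<Rightarrow> 'a \<Rightarrow> real"
  assumes pm: "\<And>i. pseudometric_on B (\<rho> i)" and pc: "\<And>i. precompact_on B (\<rho> i)" and "\<delta> > 0"
  shows "\<exists>\<P>. finite \<P> \<and> B \<subseteq> \<Union>\<P> \<and> (\<forall>P\<in>\<P>. P \<subseteq> B \<and> (\<forall>x\<in>P. \<forall>y\<in>P. \<forall>i. \<rho> i x y < \<delta>))"
proof -
  have "\<forall>i. \<exists>C. finite C \<and> C \<subseteq> B \<and> (\<forall>x\<in>B. \<exists>c\<in>C. \<rho> i x c < \<delta> / 2)"
    using precompact_on_finite_net[OF pc, of "\<delta> / 2"] \<open>\<delta> > 0\<close> by simp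
  then obtain C where C: "\<And>i. finite (C i)" "\<And>i. C i \<subseteq> B" "\<And>i x. x \<in> B \<Longrightarrow> \<exists>c\<in>C i. \<rho> i x c < \<delta> / 2"
    by metis
  define piece where "piece c = {x\<in>B. \<forall>i. \<rho> i x (c i) < \<delta> / 2}" for c
  have covered: "x \<in> \<Union> (piece ` Pi\<^sub>E UNIV C)" if x: "x \<in> B" for x
  proof -
    obtain c where "\<And>i. c i \<in> C i \<and> \<rho> i x (c i) < \<delta> / 2" using C(3)[OF x] by metis
    then have "c \<in> Pi\<^sub>E UNIV C" "x \<in> piece c" using x unfolding piece_def by auto
    then show ?thesis by blast
  qed
  have small: "\<rho> i x y < \<delta>" if "c \<in> Pi\<^sub>E UNIV C" "x \<in> piece c" "y \<in> piece c" for c i x y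
  proof -
    have "c i \<in> B" using that(1) C(2) by blast
    moreover have "x \<in> B" "y \<in> B" and xy: "\<rho> i x (c i) < \<delta> / 2" "\<rho> i y (c i) < \<delta> / 2"
      using that(2,3) unfolding piece_def by auto
    ultimately have "\<rho> i x y \<le> \<rho> i x (c i) + \<rho> i (c i) y" "\<rho> i (c i) y = \<rho> i y (c i)"
      using pm[of i] unfolding pseudometric_on_def by blast+
    then show ?thesis using xy by linarith
  qed
  show ?thesis
  proof (intro exI[of _ "piece ` Pi\<^sub>E UNIV C"] conjI ballI allI)
    show "finite (piece ` Pi\<^sub>E UNIV C)" using C(1) by (simp add: finite_PiE)
    show "B \<subseteq> \<Union> (piece ` Pi\<^sub>E UNIV C)" using covered by blast
  next
    fix P assume "P \<in> piece ` Pi\<^sub>E UNIV C"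
    then show "P \<subseteq> B" unfolding piece_def by blast
  next
    fix P x y i assume "P \<in> piece ` Pi\<^sub>E UNIV C" "x \<in> P" "y \<in> P"
    then show "\<rho> i x y < \<delta>" using small by blast
  qed
qed

lemma mono_if_coordinatewise_mono:
  fixes g :: "real^'m \<Rightarrow> real"
  assumes g_mono: "\<And>i x y. (\<forall>j. 0 \<le> x $ j) \<Longrightarrow> (\<forall>j. j \<noteq> i \<longrightarrow> y $ j = x $ j) \<Longrightarrow>
                   x $ i \<le> y $ i \<Longrightarrow> g x \<le> g y"
    and "0 \<le> x" "x \<le> y"
  shows "g x \<le> g y"
proof -
  \<comment> \<open>Raise the coordinates of \<open>x\<close> to those of \<open>y\<close> one index at a time.\<close>
  define z where "z I = (\<chi> j. if j \<in> I then y $ j else x $ j)" for I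
  have "g x \<le> g (z I)" if "finite I" for I
    using that
  proof (induction I rule: finite_induct)
    case empty
    then show ?case by (simp add: z_def)
  next
    case (insert a I)
    have "g (z I) \<le> g (z (insert a I))"
    proof (rule g_mono[of "z I" a])
      show "\<forall>j. 0 \<le> z I $ j" using \<open>0 \<le> x\<close> \<open>x \<le> y\<close> by (auto simp: z_def less_eq_vec_def intro: order_trans)
      show "\<forall>j. j \<noteq> a \<longrightarrow> z (insert a I) $ j = z I $ j" by (simp add: z_def)
      show "z I $ a \<le> z (insert a I) $ a" using \<open>a \<notin> I\<close> \<open>x \<le> y\<close> by (simp add: z_def less_eq_vec_def)
    qed
    then show ?case using insert.IH by linarith
  qed
  moreover have "z UNIV = y" by (simp add: z_def vec_eq_iff)
  ultimately show ?thesis by (metis finite)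
qed

lemma diagonal_value_small:
  fixes g :: "real^'m \<Rightarrow> real"
  assumes "g 0 = 0" and g_cont: "continuous (at 0 within {x. \<forall>j. 0 \<le> x $ j}) g" and "e > 0" "\<delta>0 > 0"
  shows "\<exists>\<delta>>0. \<delta> \<le> \<delta>0 \<and> g (\<chi> i. \<delta>) < e"
proof -
  have diag: "(\<chi> i. \<delta>) = \<delta> *\<^sub>R (1::real^'m)" for \<delta> by (simp add: vec_eq_iff)
  have "((\<lambda>\<delta>. \<delta> *\<^sub>R (1::real^'m)) \<longlongrightarrow> 0) (at_right 0)"
    by (auto intro!: tendsto_eq_intros)
  moreover have "\<forall>\<^sub>F \<delta> in at_right 0. \<delta> *\<^sub>R (1::real^'m) \<in> {x. \<forall>j. 0 \<le> x $ j} - {0}"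
    by (auto simp: eventually_at_right_field vec_eq_iff intro: exI[of _ 1])
  ultimately have diag_lim: "filterlim (\<lambda>\<delta>. \<delta> *\<^sub>R (1::real^'m)) (at 0 within {x. \<forall>j. 0 \<le> x $ j}) (at_right 0)"
    by (rule filterlim_at_withinI)
  have "(g \<longlongrightarrow> 0) (at 0 within {x. \<forall>j. 0 \<le> x $ j})"
    using g_cont \<open>g 0 = 0\<close> by (simp add: continuous_within)
  then have "((\<lambda>\<delta>. g (\<chi> i. \<delta>)) \<longlongrightarrow> 0) (at_right 0)"
    unfolding diag using diag_lim by (rule filterlim_compose)
  then have "\<forall>\<^sub>F \<delta> in at_right 0. g (\<chi> i. \<delta>) < e"
    using \<open>e > 0\<close> by (rule order_tendstoD)
  moreover have "\<forall>\<^sub>F \<delta> in at_right 0. 0 < \<delta> \<and> \<delta> \<le> \<delta>0"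
    using \<open>\<delta>0 > 0\<close> by (auto simp: eventually_at_right_field intro: exI[of _ \<delta>0])
  ultimately have "\<forall>\<^sub>F \<delta> in at_right 0. 0 < \<delta> \<and> \<delta> \<le> \<delta>0 \<and> g (\<chi> i. \<delta>) < e"
    by eventually_elim auto
  then show ?thesis using eventually_happens[of _ "at_right (0::real)"] by auto
qed

lemma kuratowski_image_contraction:
  fixes f :: "'a::metric_space \<Rightarrow> 'b::metric_space"
    and g :: "real^'m \<Rightarrow> real" and \<rho> :: "'m \<Rightarrow> 'a \<Rightarrow> 'a \<Rightarrow> real"
  assumes "bounded B0" "A \<subseteq> B0" "0 \<le> \<eta>" "\<delta>0 > 0"
    and g_mono: "\<And>x y. 0 \<le> x \<Longrightarrow> x \<le> y \<Longrightarrow> g x \<le> g y"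
    and g_zero: "g 0 = 0" and g_cont: "continuous (at 0 within {x. \<forall>j. 0 \<le> x $ j}) g"
    and \<rho>_pm: "\<And>i. pseudometric_on B0 (\<rho> i)" and \<rho>_pc: "\<And>i. precompact_on B0 (\<rho> i)"
    and contr: "\<And>y1 y2. y1 \<in> B0 \<Longrightarrow> y2 \<in> B0 \<Longrightarrow> (\<forall>i. \<rho> i y1 y2 \<le> \<delta>0) \<Longrightarrow>
          dist (f y1) (f y2) \<le> \<eta> * dist y1 y2 + g (\<chi> i. \<rho> i y1 y2)"
  shows "kuratowski (f ` A) \<le> \<eta> * kuratowski A"
proof (rule kuratowski_image_le)
  show "bounded A" using assms(1,2) by (rule bounded_subset)
  show "0 \<le> \<eta>" by fact
  fix e :: real assume "e > 0"
  obtain \<delta> where \<delta>: "\<delta> > 0" "\<delta> \<le> \<delta>0" "g (\<chi> i. \<delta>) < e"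
    using diagonal_value_small[OF g_zero g_cont \<open>e > 0\<close> \<open>\<delta>0 > 0\<close>] by auto
  obtain \<P> where \<P>: "finite \<P>" "B0 \<subseteq> \<Union>\<P>"
    and pieces: "\<forall>P\<in>\<P>. P \<subseteq> B0 \<and> (\<forall>x\<in>P. \<forall>y\<in>P. \<forall>i. \<rho> i x y < \<delta>)"
    using precompact_pseudometrics_finite_cover[of B0 \<rho>, OF \<rho>_pm \<rho>_pc \<delta>(1)] by auto
  have "dist (f x) (f y) \<le> \<eta> * dist x y + e" if "P \<in> \<P>" "x \<in> P" "y \<in> P" for P x y
  proof -
    have xy: "x \<in> B0" "y \<in> B0" and \<rho>_less: "\<And>i. \<rho> i x y < \<delta>" using pieces that by blast+
    have "0 \<le> (\<chi> i. \<rho> i x y)" using \<rho>_pm xy by (simp add: less_eq_vec_def pseudometric_on_def)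
    moreover have "(\<chi> i. \<rho> i x y) \<le> (\<chi> i. \<delta>)" using \<rho>_less by (simp add: less_eq_vec_def less_imp_le)
    ultimately have "g (\<chi> i. \<rho> i x y) \<le> g (\<chi> i. \<delta>)" by (rule g_mono)
    moreover have "\<rho> i x y \<le> \<delta>0" for i using \<rho>_less[of i] \<delta>(2) by linarith
    then have "dist (f x) (f y) \<le> \<eta> * dist x y + g (\<chi> i. \<rho> i x y)" using contr[OF xy] by blast
    ultimately show ?thesis using \<delta>(3) by linarith
  qed
  then show "\<exists>\<P>. finite \<P> \<and> A \<subseteq> \<Union>\<P> \<and>
               (\<forall>P\<in>\<P>. \<forall>x\<in>P \<inter> A. \<forall>y\<in>P \<inter> A. dist (f x) (f y) \<le> \<eta> * dist x y + e)"
    using \<P> \<open>A \<subseteq> B0\<close> by (intro exI[of _ \<P>]) auto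
qed

lemma kuratowski_semigroup_power:
  assumes "semigroup S" "positively_invariant S B0" "T \<ge> 0" "0 \<le> \<eta>"
    and step: "\<And>A. A \<subseteq> B0 \<Longrightarrow> kuratowski (S T ` A) \<le> \<eta> * kuratowski A"
    and "A \<subseteq> B0"
  shows "kuratowski (S (real k * T) ` A) \<le> \<eta> ^ k * kuratowski A"
proof (induction k)
  case 0
  have "S 0 = id" using \<open>semigroup S\<close> by (simp add: semigroup_def)
  then show ?case by simp
next
  case (Suc k)
  have kT: "real k * T \<ge> 0" using \<open>T \<ge> 0\<close> by simp
  have "S (real (Suc k) * T) = S T \<circ> S (real k * T)"
    using \<open>semigroup S\<close> \<open>T \<ge> 0\<close> kT unfolding semigroup_def by (simp add: algebra_simps)
  then have "S (real (Suc k) * T) ` A = S T ` (S (real k * T) ` A)" by (simp add: image_comp)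
  moreover have "S (real k * T) ` A \<subseteq> B0"
    using \<open>positively_invariant S B0\<close> kT \<open>A \<subseteq> B0\<close> unfolding positively_invariant_def by blast
  ultimately have "kuratowski (S (real (Suc k) * T) ` A) \<le> \<eta> * kuratowski (S (real k * T) ` A)"
    using step by simp
  also have "\<dots> \<le> \<eta> * (\<eta> ^ k * kuratowski A)" using Suc.IH \<open>0 \<le> \<eta>\<close> by (rule mult_left_mono)
  finally show ?case by simp
qed

lemma power_le_rpow:
  assumes "0 \<le> \<eta>" "\<eta> \<le> 1" "0 \<le> x" "x \<le> real k"
  shows "\<eta> ^ k \<le> rpow \<eta> x"
proof (cases "x = 0")
  case True
  then show ?thesis using assms(1,2) by (simp add: rpow_def power_le_one)
next
  case False
  show ?thesis
  proof (cases "\<eta> = 0")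
    case True
    have "k \<noteq> 0" using \<open>x \<noteq> 0\<close> assms(3,4) by auto
    then show ?thesis using True \<open>x \<noteq> 0\<close> by (simp add: rpow_def power_0_left)
  next
    case False
    then have "\<eta> ^ k = \<eta> powr real k" using assms(1) by (simp add: powr_realpow)
    also have "\<dots> \<le> \<eta> powr x" using assms by (intro powr_mono') auto
    finally show ?thesis using \<open>x \<noteq> 0\<close> by (simp add: rpow_def)
  qed
qed

lemma kuratowski_absorbed_decay:
  assumes "semigroup S" "positively_invariant S B0" "bounded B0" "T > 0" "0 \<le> \<eta>" "\<eta> \<le> 1"
    and step: "\<And>A. A \<subseteq> B0 \<Longrightarrow> kuratowski (S T ` A) \<le> \<eta> * kuratowski A"
    and "tstar \<ge> 0" and absorbed: "\<forall>t\<ge>tstar. S t ` B \<subseteq> B0" and "t \<ge> tstar + T"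
  shows "kuratowski (S t ` B) \<le> rpow \<eta> ((t - tstar - T) / T) * kuratowski B0"
proof -
  define k where "k = nat \<lfloor>(t - tstar) / T\<rfloor>"
  have "(t - tstar) / T \<ge> 1" using assms(4,10) by (simp add: field_simps)
  then have k: "real k \<le> (t - tstar) / T" "(t - tstar) / T < real k + 1" unfolding k_def by linarith+
  define s where "s = t - real k * T"
  have "real k * T \<le> t - tstar" using k(1) \<open>T > 0\<close> by (simp add: field_simps)
  then have "s \<ge> tstar" unfolding s_def by linarith
  have "S (real k * T + s) = S (real k * T) \<circ> S s"
    using \<open>semigroup S\<close> \<open>T > 0\<close> \<open>s \<ge> tstar\<close> \<open>tstar \<ge> 0\<close> unfolding semigroup_def by simp
  then have "S t ` B = S (real k * T) ` (S s ` B)" by (simp add: s_def image_comp)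
  moreover have sB: "S s ` B \<subseteq> B0" using absorbed \<open>s \<ge> tstar\<close> by blast
  ultimately have "kuratowski (S t ` B) \<le> \<eta> ^ k * kuratowski (S s ` B)"
    using kuratowski_semigroup_power[OF assms(1,2) _ \<open>0 \<le> \<eta>\<close> step sB, of k] \<open>T > 0\<close> by simp
  also have "\<dots> \<le> \<eta> ^ k * kuratowski B0"
    using kuratowski_mono[OF sB \<open>bounded B0\<close>] \<open>0 \<le> \<eta>\<close> by (simp add: mult_left_mono)
  also have "\<dots> \<le> rpow \<eta> ((t - tstar - T) / T) * kuratowski B0"
  proof (rule mult_right_mono)
    have "(t - tstar - T) / T = (t - tstar) / T - 1" using \<open>T > 0\<close> by (simp add: field_simps)
    then show "\<eta> ^ k \<le> rpow \<eta> ((t - tstar - T) / T)"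
      using k assms(5,6) \<open>(t - tstar) / T \<ge> 1\<close> by (intro power_le_rpow) auto
  qed (rule kuratowski_nonneg[OF \<open>bounded B0\<close>])
  finally show ?thesis .
qed

lemma rpow_bound_imp_exponential_bound:
  fixes u :: "real \<Rightarrow> real"
  assumes "0 \<le> \<eta>" "\<eta> < 1" "T > 0" "0 \<le> a"
    and bound: "\<And>t. t \<ge> T \<Longrightarrow> u t \<le> rpow \<eta> ((t - T) / T) * a"
  shows "\<exists>C>0. \<exists>\<beta>>0. \<forall>t\<ge>T. u t \<le> C * exp (- \<beta> * t)"
proof -
  define \<theta> where "\<theta> = max \<eta> (1 / 2)"
  have \<theta>: "0 < \<theta>" "\<theta> < 1" "\<eta> \<le> \<theta>" using assms(1,2) by (auto simp: \<theta>_def)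
  define \<beta> where "\<beta> = - ln \<theta> / T"
  have "\<beta> > 0" using \<theta> \<open>T > 0\<close> by (simp add: \<beta>_def divide_neg_pos)
  moreover have "u t \<le> (a + 1) / \<theta> * exp (- \<beta> * t)" if "t \<ge> T" for t
  proof -
    have "rpow \<eta> ((t - T) / T) \<le> \<theta> powr ((t - T) / T)"
      using that \<theta> assms \<open>T > 0\<close> by (cases "\<eta> = 0") (auto simp: rpow_def intro: powr_mono2)
    also have "\<dots> = exp (ln \<theta> * ((t - T) / T))" using \<theta>(1) by (simp add: powr_def)
    also have "ln \<theta> * ((t - T) / T) = - \<beta> * t - ln \<theta>"
      using \<open>T > 0\<close> by (simp add: \<beta>_def field_simps)
    also have "exp (- \<beta> * t - ln \<theta>) = exp (- \<beta> * t) / \<theta>"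
      using \<theta>(1) by (simp add: exp_diff)
    finally have "rpow \<eta> ((t - T) / T) * a \<le> exp (- \<beta> * t) / \<theta> * a"
      using \<open>0 \<le> a\<close> by (rule mult_right_mono)
    also have "\<dots> \<le> exp (- \<beta> * t) / \<theta> * (a + 1)"
      using \<theta>(1) by (intro mult_left_mono) auto
    finally show ?thesis using bound[OF that] by (simp add: field_simps)
  qed
  moreover have "(a + 1) / \<theta> > 0" using \<theta>(1) \<open>0 \<le> a\<close> by simp
  ultimately show ?thesis by blast
qed

theorem theorem4p5:
  fixes S :: "real \<Rightarrow> 'a::complete_space \<Rightarrow> 'a"
    and B0 :: "'a set"
    and T \<delta>0 \<eta> :: real
    and g :: "real^'m \<Rightarrow> real"
    and \<rho> :: "'m \<Rightarrow> 'a \<Rightarrow> 'a \<Rightarrow> real"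
  assumes diss: "dissipative S"
    and B0_abs: "absorbing_set S B0"
    and B0_inv: "positively_invariant S B0"
    and T_pos: "T > 0" and \<delta>0_pos: "\<delta>0 > 0"
    and \<eta>_range: "0 \<le> \<eta>" "\<eta> < 1"
    and g_nonneg: "\<And>x. (\<forall>j. 0 \<le> x $ j) \<Longrightarrow> 0 \<le> g x"
    and g_mono: "\<And>i x y. (\<forall>j. 0 \<le> x $ j) \<Longrightarrow> (\<forall>j. j \<noteq> i \<longrightarrow> y $ j = x $ j) \<Longrightarrow>
                   x $ i \<le> y $ i \<Longrightarrow> g x \<le> g y"
    and g_zero: "g 0 = 0"
    and g_cont: "continuous (at 0 within {x. \<forall>j. 0 \<le> x $ j}) g"
    and \<rho>_pm: "\<And>i. pseudometric_on B0 (\<rho> i)"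
    and \<rho>_pc: "\<And>i. precompact_on B0 (\<rho> i)"
    and contr: "\<And>y1 y2. y1 \<in> B0 \<Longrightarrow> y2 \<in> B0 \<Longrightarrow> (\<forall>i. \<rho> i y1 y2 \<le> \<delta>0) \<Longrightarrow>
          dist (S T y1) (S T y2) \<le> \<eta> * dist y1 y2 + g (\<chi> i. \<rho> i y1 y2)"
  shows "exp_decaying S B0 \<and>
         (\<forall>B tstar. bounded B \<longrightarrow> tstar \<ge> 0 \<longrightarrow> (\<forall>t\<ge>tstar. S t ` B \<subseteq> B0) \<longrightarrow>
            (\<forall>t\<ge>tstar + T. kuratowski (S t ` B) \<le> rpow \<eta> ((t - tstar - T) / T) * kuratowski B0))"
proof -
  have sg: "semigroup S" using diss by (simp add: dissipative_def)
  have bB0: "bounded B0" using B0_abs by (simp add: absorbing_set_def)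
  have g_mono_vec: "\<And>x y. 0 \<le> x \<Longrightarrow> x \<le> y \<Longrightarrow> g x \<le> g y"
    by (rule mono_if_coordinatewise_mono[OF g_mono])
  have step: "\<And>A. A \<subseteq> B0 \<Longrightarrow> kuratowski (S T ` A) \<le> \<eta> * kuratowski A"
    using kuratowski_image_contraction[where \<rho> = \<rho>,
        OF bB0 _ \<eta>_range(1) \<delta>0_pos g_mono_vec g_zero g_cont \<rho>_pm \<rho>_pc contr] .
  have decay: "kuratowski (S t ` B) \<le> rpow \<eta> ((t - tstar - T) / T) * kuratowski B0"
    if "tstar \<ge> 0" "\<forall>t\<ge>tstar. S t ` B \<subseteq> B0" "t \<ge> tstar + T" for B tstar t
    using kuratowski_absorbed_decay[OF sg B0_inv bB0 T_pos \<eta>_range(1) _ step that] \<eta>_range(2) by simp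
  have "kuratowski (S t ` B0) \<le> rpow \<eta> ((t - T) / T) * kuratowski B0" if "t \<ge> T" for t
    using decay[of 0 B0 t] B0_inv that unfolding positively_invariant_def by simp
  then have "\<exists>C>0. \<exists>\<beta>>0. \<forall>t\<ge>T. kuratowski (S t ` B0) \<le> C * exp (- \<beta> * t)"
    by (rule rpow_bound_imp_exponential_bound[OF \<eta>_range T_pos kuratowski_nonneg[OF bB0]])
  then have "exp_decaying S B0"
    unfolding exp_decaying_def using diss B0_abs B0_inv T_pos by blast
  then show ?thesis using decay by blast
qed

end
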